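(* Run GBPA with the stochastically smoothed potential whose perturbation is $\eta Z$, where $Z$ is uniformly distributed on $[0,1]$ and $\eta = (NT)^{2/3}$. Then for every sequence of gain vectors $g_1,\dots,g_T\in[-1,0]^N$ the expected regret is at most $3(NT)^{2/3}$.
   Context: Adversarial multi-armed bandit: there are $N$ arms and $T$ rounds; an oblivious adversary fixes gain vectors $g_1,\dots,g_T \in [-1,0]^N$ in advance. For a random variable $W$ with a continuous distribution on $\mathbb{R}$ and finite expectation, the stochastically smoothed potential is $\tilde\Phi(G) = \mathbb{E}[\max_{i}(G_i + W_i)]$ for $G\in\mathbb{R}^N$, where $W_1,\dots,W_N$ are i.i.d. copies of $W$; it is convex and differentiable with $\nabla_i\tilde\Phi(G) = \mathbb{P}(i = \arg\max_j (G_j+W_j))$, so $\nabla\tilde\Phi(G)$ lies in the probability simplex (some coordinates may be $0$). "Perturbation $\eta Z$" means $W=\eta Z$. The algorithm GBPA$(\tilde\Phi)$: set $\hat G_0 = 0$; for $t=1,\dots,T$: let $p_t = \nabla\tilde\Phi(\hat G_{t-1})$, draw arm $i_t \sim p_t$, observe only $g_{t,i_t}$, set $\hat g_t = \frac{g_{t,i_t}}{p_{t,i_t}} e_{i_t}$ and $\hat G_t = \hat G_{t-1} + \hat g_t$. The expected regret is $\mathbb{E}\big[\max_{i}\sum_{t=1}^T (g_{t,i} - g_{t,i_t})\big]$ over the learner's random choices. *)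

theory Defs
  imports "HOL-Probability.Probability"
begin

text \<open>Arms are 0,...,N-1, rounds are 0,...,T-1. Gains: g t i.
  Perturbation vector: Z_0,...,Z_{N-1} i.i.d. uniform on [0,1], scaled by eta.\<close>

definition pert :: "nat \<Rightarrow> (nat \<Rightarrow> real) measure" where
  "pert N = PiM {..<N} (\<lambda>_. uniform_measure lborel {0..1::real})"

definition smoothed_potential :: "nat \<Rightarrow> real \<Rightarrow> (nat \<Rightarrow> real) \<Rightarrow> real" where
  "smoothed_potential N \<eta> G = (\<integral>z. (MAX i\<in>{..<N}. G i + \<eta> * z i) \<partial>pert N)"

text \<open>Gradient of the smoothed potential, coordinate i:
  P(i = argmax_j (G_j + eta Z_j)) (ties have probability zero).\<close>
definition grad_prob :: "nat \<Rightarrow> real \<Rightarrow> (nat \<Rightarrow> real) \<Rightarrow> nat \<Rightarrow> real" where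
  "grad_prob N \<eta> G i =
     measure (pert N) {z \<in> space (pert N). \<forall>j<N. j \<noteq> i \<longrightarrow> G j + \<eta> * z j < G i + \<eta> * z i}"

text \<open>Cumulative gain estimate hat G_t from a history of chosen arms,
  stored most-recent-first: history (i # hs) means arm i was chosen in round length hs.\<close>
fun est :: "nat \<Rightarrow> real \<Rightarrow> (nat \<Rightarrow> nat \<Rightarrow> real) \<Rightarrow> nat list \<Rightarrow> nat \<Rightarrow> real" where
  "est N \<eta> g [] = (\<lambda>_. 0)"
| "est N \<eta> g (i # hs) =
     (let G = est N \<eta> g hs
      in G(i := G i + g (length hs) i / grad_prob N \<eta> G i))"

definition arm_pmf :: "nat \<Rightarrow> real \<Rightarrow> (nat \<Rightarrow> real) \<Rightarrow> nat pmf" where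
  "arm_pmf N \<eta> G = embed_pmf (\<lambda>i. if i < N then grad_prob N \<eta> G i else 0)"

fun hist :: "nat \<Rightarrow> real \<Rightarrow> (nat \<Rightarrow> nat \<Rightarrow> real) \<Rightarrow> nat \<Rightarrow> nat list pmf" where
  "hist N \<eta> g 0 = return_pmf []"
| "hist N \<eta> g (Suc t) =
     bind_pmf (hist N \<eta> g t) (\<lambda>hs. map_pmf (\<lambda>i. i # hs) (arm_pmf N \<eta> (est N \<eta> g hs)))"

definition expected_regret :: "nat \<Rightarrow> nat \<Rightarrow> real \<Rightarrow> (nat \<Rightarrow> nat \<Rightarrow> real) \<Rightarrow> real" where
  "expected_regret N T \<eta> g =
     measure_pmf.expectation (hist N \<eta> g T)
       (\<lambda>hs. (MAX i\<in>{..<N}. \<Sum>t<T. g t i) - (\<Sum>t<T. g t (rev hs ! t)))"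

end

theory Submission
  imports Defs
begin

text \<open>
  Let \<open>\<Phi>\<close> be the smoothed potential, \<open>G\<^sub>t\<close> the importance-weighted gain estimate after
  \<open>t\<close> rounds and \<open>W\<^sub>t = \<Phi> G\<^sub>t - (gain collected so far)\<close>. Since \<open>\<Phi> \<ge> max\<close> and the
  estimates are unbiased, the expected regret is at most \<open>E W\<^sub>T\<close>, and \<open>W\<^sub>0 = \<Phi> 0 \<le> \<eta>\<close>.
  When arm \<open>i\<close> of probability \<open>p\<close> is pulled, its coordinate moves down by \<open>c = |g| / p\<close>. The
  perturbed maximum then drops by \<open>c\<close> wherever \<open>i\<close> leads by more than \<open>c\<close>, so \<open>\<Phi>\<close> drops by
  at least \<open>c * p\<close> minus \<open>c\<close> times the probability that \<open>i\<close> leads by less than \<open>c\<close>; that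
  probability is at most \<open>min p (c / \<eta>)\<close> because the uniform perturbation has density \<open>1 / \<eta>\<close>.
  So each arm adds at most \<open>p * c * min p (c / \<eta>) \<le> min p (1 / (p * \<eta>)) \<le> 1 / sqrt \<eta>\<close> to
  \<open>E W\<close> per round, the regret is at most \<open>\<eta> + T * N / sqrt \<eta>\<close>, and this is
  \<open>2 * (N * T) powr (2/3)\<close> for \<open>\<eta> = (N * T) powr (2/3)\<close>.
\<close>

abbreviation unit_uniform :: "real measure" where
  "unit_uniform \<equiv> uniform_measure lborel {0..1}"

lemma prob_space_unit_uniform: "prob_space unit_uniform"
  by (rule prob_space_uniform_measure) auto

interpretation unit_uniform_product: product_prob_space "\<lambda>_::nat. unit_uniform" UNIV
  by (simp add: product_prob_space_def product_prob_space_axioms_def product_sigma_finite_def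
      prob_space_unit_uniform prob_space_imp_sigma_finite)

interpretation pert: prob_space "pert N" for N
  unfolding pert_def by (rule prob_space_PiM) (simp add: prob_space_unit_uniform)

lemma sets_pert [measurable_cong]: "sets (pert N) = sets (PiM {..<N} (\<lambda>_. borel :: real measure))"
  unfolding pert_def by (rule sets_PiM_cong) simp_all

lemma emeasure_unit_uniform_atLeastAtMost_le:
  assumes "a \<le> b"
  shows "emeasure unit_uniform {a..b} \<le> ennreal (b - a)"
proof -
  have "emeasure unit_uniform {a..b} = emeasure lborel ({0..1} \<inter> {a..b})"
    by (simp add: divide_ennreal_def)
  also have "\<dots> \<le> emeasure lborel {a..b}"
    by (rule emeasure_mono) auto
  finally show ?thesis
    using assms by simp
qed

lemma AE_pert_unit_cube: "AE z in pert N. \<forall>i\<in>{..<N}. 0 \<le> z i \<and> z i \<le> 1"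
proof (rule AE_finite_allI)
  fix i assume "i \<in> {..<N}"
  moreover have "AE y in unit_uniform. 0 \<le> y \<and> y \<le> 1"
    by (rule AE_uniform_measureI) auto
  ultimately show "AE z in pert N. 0 \<le> z i \<and> z i \<le> 1"
    unfolding pert_def by (intro AE_PiM_component) (auto simp: prob_space_unit_uniform)
qed simp

text \<open>Fubini in the coordinate \<open>i\<close>: a set whose sections along \<open>i\<close> are all small is small.\<close>

lemma emeasure_pert_le_sections:
  assumes i: "i < N"
    and sets: "{z \<in> space (pert N). P z (z i)} \<in> sets (pert N)"
    and indep: "\<And>z w. P (z(i := w)) = P z"
    and sections: "\<And>z. emeasure unit_uniform {y. P z y} \<le> \<delta>"
  shows "emeasure (pert N) {z \<in> space (pert N). P z (z i)} \<le> \<delta>"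
proof -
  define I where "I = {..<N} - {i}"
  have I: "finite I" "i \<notin> I" "insert i I = {..<N}"
    using i by (auto simp: I_def)
  define S where "S = {z \<in> space (pert N). P z (z i)}"
  have pert: "pert N = PiM (insert i I) (\<lambda>_. unit_uniform)"
    by (simp add: pert_def I)
  have S: "S \<in> sets (PiM (insert i I) (\<lambda>_. unit_uniform))"
    using sets pert by (simp add: S_def)
  have "emeasure (pert N) S = (\<integral>\<^sup>+ z. indicator S z \<partial>PiM (insert i I) (\<lambda>_. unit_uniform))"
    using S pert by simp
  also have "\<dots> = (\<integral>\<^sup>+ x. (\<integral>\<^sup>+ y. indicator S (x(i := y)) \<partial>unit_uniform) \<partial>PiM I (\<lambda>_. unit_uniform))"
    by (rule unit_uniform_product.product_nn_integral_insert[OF I(1,2)]) (use S in simp)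
  also have "\<dots> \<le> (\<integral>\<^sup>+ x. \<delta> \<partial>PiM I (\<lambda>_. unit_uniform))"
  proof (rule nn_integral_mono)
    fix x assume x: "x \<in> space (PiM I (\<lambda>_. unit_uniform))"
    have update: "(\<lambda>y. x(i := y)) \<in> measurable unit_uniform (PiM (insert i I) (\<lambda>_. unit_uniform))"
      by (rule measurable_component_update[OF x I(2)])
    have fibre: "indicator S (x(i := y)) = (indicator {y. P x y} y :: ennreal)" for y
      using measurable_space[OF update, of y] pert indep[of x y] by (simp add: S_def indicator_def)
    have "(\<lambda>y. indicator S (x(i := y)) :: ennreal) \<in> borel_measurable unit_uniform"
      using measurable_comp[OF update borel_measurable_indicator[OF S]] by (simp add: o_def)
    then have "{y. P x y} \<in> sets unit_uniform"
      by (simp add: fibre borel_measurable_indicator_iff del: sets_uniform_measure)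
    then show "(\<integral>\<^sup>+ y. indicator S (x(i := y)) \<partial>unit_uniform) \<le> \<delta>"
      using sections[of x] by (simp add: fibre)
  qed
  also have "\<dots> = \<delta>"
    using prob_space.emeasure_space_1[OF prob_space_PiM, of I "\<lambda>_. unit_uniform"]
    by (simp add: prob_space_unit_uniform)
  finally show ?thesis
    by (simp add: S_def)
qed

lemma AE_pert_no_ties:
  assumes "0 < \<eta>"
  shows "AE z in pert N. \<forall>i\<in>{..<N}. \<forall>j\<in>{..<N}. j \<noteq> i \<longrightarrow> G j + \<eta> * z j \<noteq> G i + \<eta> * z i"
proof (intro AE_finite_allI)
  fix i j assume "i \<in> {..<N}" "j \<in> {..<N}"
  then have [simp]: "i < N" "j < N" by auto
  show "AE z in pert N. j \<noteq> i \<longrightarrow> G j + \<eta> * z j \<noteq> G i + \<eta> * z i"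
  proof (cases "j = i")
    case False
    define tie where "tie z y \<longleftrightarrow> G j + \<eta> * z j = G i + \<eta> * y" for z y
    have tie_sets: "{z \<in> space (pert N). tie z (z i)} \<in> sets (pert N)"
      unfolding tie_def by measurable
    have "emeasure (pert N) {z \<in> space (pert N). tie z (z i)} \<le> 0"
    proof (rule emeasure_pert_le_sections[where P = tie, OF _ tie_sets])
      fix z
      let ?a = "(G j + \<eta> * z j - G i) / \<eta>"
      have "{y. tie z y} \<subseteq> {?a..?a}"
        using assms by (auto simp: tie_def field_simps)
      then have "emeasure unit_uniform {y. tie z y} \<le> emeasure unit_uniform {?a..?a}"
        by (rule emeasure_mono) simp
      also have "\<dots> \<le> 0"
        using emeasure_unit_uniform_atLeastAtMost_le[of ?a ?a] by simp
      finally show "emeasure unit_uniform {y. tie z y} \<le> 0" .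
    qed (use False in \<open>auto simp: tie_def fun_eq_iff\<close>)
    then have "AE z in pert N. \<not> tie z (z i)"
      by (subst AE_iff_measurable[OF tie_sets]) auto
    then show ?thesis
      by (simp add: tie_def)
  qed simp
qed simp_all

definition perturbed_max :: "nat \<Rightarrow> real \<Rightarrow> (nat \<Rightarrow> real) \<Rightarrow> (nat \<Rightarrow> real) \<Rightarrow> real" where
  "perturbed_max N \<eta> G z = (MAX i\<in>{..<N}. G i + \<eta> * z i)"

lemma smoothed_potential_eq_integral:
  "smoothed_potential N \<eta> G = (\<integral>z. perturbed_max N \<eta> G z \<partial>pert N)"
  by (simp add: smoothed_potential_def perturbed_max_def)

lemma borel_measurable_perturbed_max [measurable]:
  "perturbed_max N \<eta> G \<in> borel_measurable (pert N)"
  unfolding perturbed_max_def[abs_def] by measurable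

lemma abs_Max_le_sum_abs:
  fixes f :: "'a \<Rightarrow> real"
  assumes "finite K" "K \<noteq> {}"
  shows "\<bar>MAX i\<in>K. f i\<bar> \<le> (\<Sum>i\<in>K. \<bar>f i\<bar>)"
proof -
  obtain k where "k \<in> K" "(MAX i\<in>K. f i) = f k"
    using obtains_MAX[OF assms] .
  then show ?thesis
    using member_le_sum[of k K "\<lambda>i. \<bar>f i\<bar>"] assms by simp
qed

lemma integrable_perturbed_max:
  assumes "0 < N"
  shows "integrable (pert N) (perturbed_max N \<eta> G)"
proof (rule pert.integrable_const_bound)
  show "AE z in pert N. norm (perturbed_max N \<eta> G z) \<le> (\<Sum>i<N. \<bar>G i\<bar> + \<bar>\<eta>\<bar>)"
    using AE_pert_unit_cube
  proof eventually_elim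
    case (elim z)
    have "\<bar>perturbed_max N \<eta> G z\<bar> \<le> (\<Sum>i<N. \<bar>G i + \<eta> * z i\<bar>)"
      unfolding perturbed_max_def by (rule abs_Max_le_sum_abs) (use assms in auto)
    also have "\<dots> \<le> (\<Sum>i<N. \<bar>G i\<bar> + \<bar>\<eta>\<bar>)"
    proof (rule sum_mono)
      fix i assume "i \<in> {..<N}"
      then have "\<bar>\<eta> * z i\<bar> \<le> \<bar>\<eta>\<bar>"
        using elim by (simp add: abs_mult mult_left_le)
      then show "\<bar>G i + \<eta> * z i\<bar> \<le> \<bar>G i\<bar> + \<bar>\<eta>\<bar>"
        by linarith
    qed
    finally show ?case by simp
  qed
qed simp

lemma smoothed_potential_zero_le:
  assumes "0 < N" "0 \<le> \<eta>"
  shows "smoothed_potential N \<eta> (\<lambda>_. 0) \<le> \<eta>"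
proof -
  have "smoothed_potential N \<eta> (\<lambda>_. 0) \<le> (\<integral>z. \<eta> \<partial>pert N)"
    unfolding smoothed_potential_eq_integral
  proof (rule integral_mono_AE[OF integrable_perturbed_max[OF assms(1)]])
    show "AE z in pert N. perturbed_max N \<eta> (\<lambda>_. 0) z \<le> \<eta>"
      using AE_pert_unit_cube
    proof eventually_elim
      case (elim z)
      then have "\<forall>i<N. \<eta> * z i \<le> \<eta>"
        using assms(2) by (simp add: mult_left_le)
      then show ?case
        using assms(1) unfolding perturbed_max_def by (subst Max_le_iff) auto
    qed
  qed simp
  then show ?thesis
    by (simp add: pert.prob_space)
qed

lemma le_smoothed_potential:
  assumes "k < N" "0 \<le> \<eta>"
  shows "G k \<le> smoothed_potential N \<eta> G"
proof -
  have "(\<integral>z. G k \<partial>pert N) \<le> smoothed_potential N \<eta> G"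
    unfolding smoothed_potential_eq_integral
  proof (rule integral_mono_AE[OF _ integrable_perturbed_max])
    show "AE z in pert N. G k \<le> perturbed_max N \<eta> G z"
      using AE_pert_unit_cube
    proof eventually_elim
      case (elim z)
      have "G k \<le> G k + \<eta> * z k"
        using elim assms by simp
      also have "\<dots> \<le> perturbed_max N \<eta> G z"
        unfolding perturbed_max_def using assms by (intro Max_ge) auto
      finally show ?case .
    qed
  qed (use assms in simp_all)
  then show ?thesis
    by (simp add: pert.prob_space)
qed

definition lead_event :: "nat \<Rightarrow> real \<Rightarrow> (nat \<Rightarrow> real) \<Rightarrow> nat \<Rightarrow> (nat \<Rightarrow> real) set" where
  "lead_event N \<eta> G i =
     {z \<in> space (pert N). \<forall>j<N. j \<noteq> i \<longrightarrow> G j + \<eta> * z j < G i + \<eta> * z i}"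

lemma grad_prob_eq_measure_lead_event: "grad_prob N \<eta> G i = measure (pert N) (lead_event N \<eta> G i)"
  by (simp add: grad_prob_def lead_event_def)

lemma grad_prob_nonneg: "0 \<le> grad_prob N \<eta> G i"
  by (simp add: grad_prob_def)

lemma sets_lead_event [measurable]:
  assumes [simp]: "i < N"
  shows "lead_event N \<eta> G i \<in> sets (pert N)"
proof -
  have "lead_event N \<eta> G i =
      {z \<in> space (pert N). \<forall>j\<in>{..<N}. j \<noteq> i \<longrightarrow> G j + \<eta> * z j < G i + \<eta> * z i}"
    by (auto simp: lead_event_def)
  also have "\<dots> \<in> sets (pert N)"
    by measurable
  finally show ?thesis .
qed

lemma sum_grad_prob:
  assumes N: "0 < N" and \<eta>: "0 < \<eta>"
  shows "(\<Sum>i<N. grad_prob N \<eta> G i) = 1"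
proof -
  let ?L = "lead_event N \<eta> G"
  have "disjoint_family_on ?L {..<N}"
    unfolding disjoint_family_on_def lead_event_def by fastforce
  then have "(\<Sum>i<N. grad_prob N \<eta> G i) = measure (pert N) (\<Union>i<N. ?L i)"
    by (subst measure_finite_Union) (auto simp: grad_prob_eq_measure_lead_event)
  also have "(\<Union>i<N. ?L i) = {z \<in> space (pert N). \<exists>i<N. z \<in> ?L i}"
    by (auto simp: lead_event_def)
  also have "measure (pert N) \<dots> = 1"
  proof (rule pert.prob_Collect_eq_1[THEN iffD2])
    have "(\<Union>i<N. ?L i) \<in> sets (pert N)"
      by measurable
    then show "{z \<in> space (pert N). \<exists>i<N. z \<in> ?L i} \<in> sets (pert N)"
      by (rule back_subst) (auto simp: lead_event_def)
    show "AE z in pert N. \<exists>i<N. z \<in> ?L i"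
      using AE_pert_no_ties[OF \<eta>, of N G] AE_space
    proof eventually_elim
      case (elim z)
      obtain k where k: "k \<in> {..<N}" "(MAX j\<in>{..<N}. G j + \<eta> * z j) = G k + \<eta> * z k"
        using obtains_MAX[of "{..<N}"] N by auto
      have "G j + \<eta> * z j < G k + \<eta> * z k" if "j < N" "j \<noteq> k" for j
        using elim k that Max_ge[of "(\<lambda>j. G j + \<eta> * z j) ` {..<N}" "G j + \<eta> * z j"]
        by fastforce
      then show ?case
        using k elim by (auto simp: lead_event_def)
    qed
  qed
  finally show ?thesis .
qed

text \<open>Lowering coordinate \<open>i\<close> by \<open>c\<close> lowers the maximum by exactly \<open>c\<close> when \<open>i\<close> leads by more
  than \<open>c\<close>, by at most \<open>c\<close> when it leads by less, and not at all when it does not lead.\<close>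

lemma Max_lower_coordinate_le:
  fixes v :: "'a \<Rightarrow> real"
  assumes I: "finite I" "i \<in> I" and c: "0 \<le> c"
  defines "lead \<equiv> \<forall>j\<in>I - {i}. v j < v i"
  shows "(MAX j\<in>I. (v(i := v i - c)) j) - (MAX j\<in>I. v j) + c * of_bool lead
           \<le> c * of_bool (lead \<and> (\<exists>j\<in>I - {i}. v i - c \<le> v j))"
proof -
  define w where "w = v(i := v i - c)"
  have ne: "I \<noteq> {}"
    using I by auto
  have "w j \<le> v j" for j
    using c by (simp add: w_def)
  then have w_le_v: "(MAX j\<in>I. w j) \<le> (MAX j\<in>I. v j)"
    using I ne by (subst Max_le_iff) (auto intro: order_trans[OF _ Max_ge])
  consider (behind) "\<not> lead" | (close) "lead" "\<exists>j\<in>I - {i}. v i - c \<le> v j"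
    | (far) "lead" "\<forall>j\<in>I - {i}. v j < v i - c"
    by (meson not_le)
  then show ?thesis
  proof cases
    case behind
    then obtain k where k: "k \<in> I - {i}" "v i \<le> v k"
      by (auto simp: lead_def not_less)
    have "v j \<le> (MAX j\<in>I. w j)" if "j \<in> I" for j
    proof (cases "j = i")
      case True
      have "w k \<le> (MAX j\<in>I. w j)"
        using I k by (intro Max_ge) auto
      then show ?thesis
        using True k by (simp add: w_def)
    next
      case False
      then show ?thesis
        using I that Max_ge[of "w ` I" "w j"] by (simp add: w_def)
    qed
    then have "(MAX j\<in>I. v j) \<le> (MAX j\<in>I. w j)"
      using I ne by (subst Max_le_iff) auto
    then show ?thesis
      using w_le_v behind by (simp add: w_def)
  next
    case close
    then show ?thesis
      using w_le_v by (simp add: w_def)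
  next
    case far
    have "w j \<le> v i - c" if "j \<in> I" for j
      using far that by (cases "j = i") (auto simp: w_def less_imp_le)
    then have "(MAX j\<in>I. w j) \<le> v i - c"
      using I ne by (subst Max_le_iff) auto
    moreover have "v i \<le> (MAX j\<in>I. v j)"
      using I by (intro Max_ge) auto
    moreover have "\<not> (\<exists>j\<in>I - {i}. v i - c \<le> v j)"
      using far by force
    ultimately show ?thesis
      using far unfolding w_def[symmetric] by simp
  qed
qed

definition close_lead_event :: "nat \<Rightarrow> real \<Rightarrow> (nat \<Rightarrow> real) \<Rightarrow> nat \<Rightarrow> real \<Rightarrow> (nat \<Rightarrow> real) set" where
  "close_lead_event N \<eta> G i c =
     {z \<in> lead_event N \<eta> G i. \<exists>j<N. j \<noteq> i \<and> G i + \<eta> * z i - c \<le> G j + \<eta> * z j}"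

lemma sets_close_lead_event [measurable]:
  assumes [simp]: "i < N"
  shows "close_lead_event N \<eta> G i c \<in> sets (pert N)"
proof -
  have "close_lead_event N \<eta> G i c = lead_event N \<eta> G i \<inter>
      (\<Union>j\<in>{..<N} - {i}. {z \<in> space (pert N). G i + \<eta> * z i - c \<le> G j + \<eta> * z j})"
    by (auto simp: close_lead_event_def lead_event_def)
  also have "\<dots> \<in> sets (pert N)"
  proof (intro sets.Int sets.finite_UN sets_lead_event[OF assms])
    fix j assume "j \<in> {..<N} - {i}"
    then have [simp]: "j < N" by simp
    show "{z \<in> space (pert N). G i + \<eta> * z i - c \<le> G j + \<eta> * z j} \<in> sets (pert N)"
      by measurable
  qed simp
  finally show ?thesis .
qed

text \<open>Given the other coordinates, \<open>i\<close> leads by at most \<open>c\<close> only for \<open>z i\<close> in an interval of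
  length \<open>c / \<eta>\<close>; this is where the bounded density of the uniform perturbation enters.\<close>

lemma measure_close_lead_event_le:
  assumes i [simp]: "i < N" and \<eta>: "0 < \<eta>" and c: "0 \<le> c"
  shows "measure (pert N) (close_lead_event N \<eta> G i c) \<le> c / \<eta>"
proof (cases "{..<N} - {i} = {}")
  case True
  then have "close_lead_event N \<eta> G i c = {}"
    by (auto simp: close_lead_event_def)
  then show ?thesis
    using \<eta> c by simp
next
  case others: False
  define M where "M z = (MAX j\<in>{..<N} - {i}. G j + \<eta> * z j)" for z
  have [measurable]: "M \<in> borel_measurable (pert N)"
    unfolding M_def[abs_def]
  proof (rule borel_measurable_Max)
    fix j assume "j \<in> {..<N} - {i}"
    then have [simp]: "j < N" by simp
    show "(\<lambda>z. G j + \<eta> * z j) \<in> borel_measurable (pert N)"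
      by measurable
  qed simp
  define window where "window z y \<longleftrightarrow> M z < G i + \<eta> * y \<and> G i + \<eta> * y \<le> M z + c" for z y
  have "{z \<in> space (pert N). window z (z i)} =
      {z \<in> space (pert N). M z < G i + \<eta> * z i} \<inter> {z \<in> space (pert N). G i + \<eta> * z i \<le> M z + c}"
    by (auto simp: window_def)
  also have "\<dots> \<in> sets (pert N)"
    by (intro sets.Int; measurable)
  finally have window_sets: "{z \<in> space (pert N). window z (z i)} \<in> sets (pert N)" .
  have "close_lead_event N \<eta> G i c \<subseteq> {z \<in> space (pert N). window z (z i)}"
  proof
    fix z assume z: "z \<in> close_lead_event N \<eta> G i c"
    have "M z < G i + \<eta> * z i"
      using z others unfolding M_def by (subst Max_less_iff) (auto simp: close_lead_event_def lead_event_def)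
    moreover obtain j where j: "j < N" "j \<noteq> i" "G i + \<eta> * z i - c \<le> G j + \<eta> * z j"
      using z by (auto simp: close_lead_event_def)
    have "G j + \<eta> * z j \<le> M z"
      unfolding M_def using j by (intro Max_ge) auto
    then have "G i + \<eta> * z i \<le> M z + c"
      using j by linarith
    ultimately show "z \<in> {z \<in> space (pert N). window z (z i)}"
      using z by (auto simp: window_def close_lead_event_def lead_event_def)
  qed
  then have "emeasure (pert N) (close_lead_event N \<eta> G i c)
      \<le> emeasure (pert N) {z \<in> space (pert N). window z (z i)}"
    by (rule emeasure_mono[OF _ window_sets])
  also have "\<dots> \<le> ennreal (c / \<eta>)"
  proof (rule emeasure_pert_le_sections[where P = window, OF i window_sets])
    have "M (z(i := w)) = M z" for z w
      unfolding M_def by (intro arg_cong[where f = Max] image_cong) auto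
    then show "window (z(i := w)) = window z" for z w
      by (simp add: window_def[abs_def])
    fix z
    let ?a = "(M z - G i) / \<eta>"
    have "{y. window z y} \<subseteq> {?a .. ?a + c / \<eta>}"
      using \<eta> by (auto simp: window_def field_simps)
    then have "emeasure unit_uniform {y. window z y} \<le> emeasure unit_uniform {?a .. ?a + c / \<eta>}"
      by (rule emeasure_mono) simp
    also have "\<dots> \<le> ennreal (c / \<eta>)"
      using emeasure_unit_uniform_atLeastAtMost_le[of ?a "?a + c / \<eta>"] \<eta> c
      by (simp del: emeasure_uniform_measure)
    finally show "emeasure unit_uniform {y. window z y} \<le> ennreal (c / \<eta>)" .
  qed
  finally show ?thesis
    using \<eta> c by (simp add: pert.emeasure_eq_measure)
qed

lemma smoothed_potential_lower_coordinate_le: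
  assumes N: "0 < N" and i: "i < N" and c: "0 \<le> c"
  shows "smoothed_potential N \<eta> (G(i := G i - c)) - smoothed_potential N \<eta> G + c * grad_prob N \<eta> G i
           \<le> c * measure (pert N) (close_lead_event N \<eta> G i c)"
proof -
  let ?L = "lead_event N \<eta> G i" and ?C = "close_lead_event N \<eta> G i c"
  have pointwise: "perturbed_max N \<eta> (G(i := G i - c)) z - perturbed_max N \<eta> G z + c * indicator ?L z
      \<le> c * indicator ?C z" if z: "z \<in> space (pert N)" for z
  proof -
    define v where "v j = G j + \<eta> * z j" for j
    have "(\<lambda>j. (G(i := G i - c)) j + \<eta> * z j) = v(i := v i - c)"
      by (auto simp: fun_eq_iff v_def)
    then have "perturbed_max N \<eta> (G(i := G i - c)) z = (MAX j\<in>{..<N}. (v(i := v i - c)) j)"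
      unfolding perturbed_max_def by (rule arg_cong[where f = "\<lambda>f. Max (f ` {..<N})"])
    moreover have "perturbed_max N \<eta> G z = (MAX j\<in>{..<N}. v j)"
      by (simp add: perturbed_max_def v_def)
    moreover have "indicator ?L z = (of_bool (\<forall>j\<in>{..<N} - {i}. v j < v i) :: real)"
      using z by (auto simp: indicator_def lead_event_def v_def)
    moreover have "indicator ?C z = (of_bool ((\<forall>j\<in>{..<N} - {i}. v j < v i)
        \<and> (\<exists>j\<in>{..<N} - {i}. v i - c \<le> v j)) :: real)"
      using z by (auto simp: indicator_def close_lead_event_def lead_event_def v_def)
    ultimately show ?thesis
      using Max_lower_coordinate_le[of "{..<N}" i c v] i c by simp
  qed
  have integrable_L: "integrable (pert N) (indicator ?L :: _ \<Rightarrow> real)"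
    and integrable_C: "integrable (pert N) (indicator ?C :: _ \<Rightarrow> real)"
    using i by (auto intro!: integrable_real_indicator simp: less_top[symmetric])
  have "smoothed_potential N \<eta> (G(i := G i - c)) - smoothed_potential N \<eta> G + c * grad_prob N \<eta> G i
      = (\<integral>z. perturbed_max N \<eta> (G(i := G i - c)) z - perturbed_max N \<eta> G z + c * indicator ?L z \<partial>pert N)"
    using integrable_perturbed_max[OF N] integrable_L i
    by (simp add: smoothed_potential_eq_integral grad_prob_eq_measure_lead_event)
  also have "\<dots> \<le> (\<integral>z. c * indicator ?C z \<partial>pert N)"
    using integrable_perturbed_max[OF N] integrable_L integrable_C pointwise by (intro integral_mono) auto
  also have "\<dots> = c * measure (pert N) ?C"
    using i by simp
  finally show ?thesis .
qed

lemma min_le_sqrt_mult: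
  fixes a b :: real
  assumes "0 \<le> a" "0 \<le> b"
  shows "min a b \<le> sqrt (a * b)"
proof (rule real_le_rsqrt)
  show "(min a b)\<^sup>2 \<le> a * b"
    using assms by (simp add: min_def power2_eq_square mult_mono)
qed

text \<open>The divergence term of one GBPA round, weighted by the probability \<open>p\<close> of the pulled arm,
  is at most \<open>min p (1 / (p * \<eta>))\<close>.\<close>

lemma grad_prob_mult_potential_step_le:
  assumes N: "0 < N" and i: "i < N" and \<eta>: "0 < \<eta>" and x: "-1 \<le> x" "x \<le> 0"
    and p: "p = grad_prob N \<eta> G i" "0 < p"
  shows "p * (smoothed_potential N \<eta> (G(i := G i + x / p)) - x - smoothed_potential N \<eta> G) \<le> 1 / sqrt \<eta>"
proof -
  define c where "c = - x / p"
  have c: "0 \<le> c" "G i + x / p = G i - c" "c * p = - x"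
    using x p by (auto simp: c_def divide_nonpos_pos)
  let ?m = "measure (pert N) (close_lead_event N \<eta> G i c)"
  have "?m \<le> p"
    unfolding p grad_prob_eq_measure_lead_event using i
    by (intro pert.finite_measure_mono) (auto simp: close_lead_event_def)
  moreover have "?m \<le> 1 / (p * \<eta>)"
  proof -
    have "?m \<le> c / \<eta>"
      by (rule measure_close_lead_event_le[OF i \<eta> c(1)])
    also have "c / \<eta> \<le> 1 / (p * \<eta>)"
      using x p \<eta> by (simp add: c_def divide_simps)
    finally show ?thesis .
  qed
  ultimately have "?m \<le> min p (1 / (p * \<eta>))"
    by simp
  also have "\<dots> \<le> 1 / sqrt \<eta>"
    using min_le_sqrt_mult[of p "1 / (p * \<eta>)"] p \<eta> by (simp add: real_sqrt_divide)
  finally have m: "?m \<le> 1 / sqrt \<eta>" .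
  have "p * (smoothed_potential N \<eta> (G(i := G i + x / p)) - x - smoothed_potential N \<eta> G)
      \<le> p * (c * ?m)"
    using smoothed_potential_lower_coordinate_le[OF N i c(1), of \<eta> G] p c
    by (intro mult_left_mono) (auto simp: mult.commute)
  also have "\<dots> = - x * ?m"
    by (metis c(3) mult.assoc mult.commute)
  also have "\<dots> \<le> ?m"
    using x mult_left_le_one_le[of ?m "- x"] by simp
  finally show ?thesis
    using m by linarith
qed

lemma one_round_potential_le:
  assumes N: "0 < N" and \<eta>: "0 < \<eta>" and x: "\<And>i. i < N \<Longrightarrow> -1 \<le> x i \<and> x i \<le> 0"
  shows "(\<Sum>i<N. grad_prob N \<eta> G i *
            (smoothed_potential N \<eta> (G(i := G i + x i / grad_prob N \<eta> G i)) - x i))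
           \<le> smoothed_potential N \<eta> G + real N / sqrt \<eta>"
proof -
  let ?p = "grad_prob N \<eta> G" and ?\<Phi> = "smoothed_potential N \<eta>"
  have "(\<Sum>i<N. ?p i * (?\<Phi> (G(i := G i + x i / ?p i)) - x i))
      \<le> (\<Sum>i<N. ?p i * ?\<Phi> G + 1 / sqrt \<eta>)"
  proof (rule sum_mono)
    fix i assume "i \<in> {..<N}"
    then have "?p i * (?\<Phi> (G(i := G i + x i / ?p i)) - x i - ?\<Phi> G) \<le> 1 / sqrt \<eta>" if "0 < ?p i"
      using x that by (intro grad_prob_mult_potential_step_le[OF N _ \<eta>]) auto
    then show "?p i * (?\<Phi> (G(i := G i + x i / ?p i)) - x i) \<le> ?p i * ?\<Phi> G + 1 / sqrt \<eta>"
      using grad_prob_nonneg[of N \<eta> G i] \<eta>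
      by (cases "?p i = 0") (auto simp: algebra_simps)
  qed
  also have "\<dots> = ?\<Phi> G + real N / sqrt \<eta>"
    using sum_grad_prob[OF N \<eta>] by (simp add: sum.distrib sum_distrib_right[symmetric])
  finally show ?thesis .
qed

context
  fixes N :: nat and \<eta> :: real
  assumes N: "0 < N" and \<eta>: "0 < \<eta>"
begin

lemma pmf_arm_pmf: "pmf (arm_pmf N \<eta> G) i = (if i < N then grad_prob N \<eta> G i else 0)"
  unfolding arm_pmf_def
proof (rule pmf_embed_pmf)
  have "(\<integral>\<^sup>+j. ennreal (if j < N then grad_prob N \<eta> G j else 0) \<partial>count_space UNIV)
      = (\<Sum>j<N. ennreal (grad_prob N \<eta> G j))"
    by (subst nn_integral_count_space'[of "{..<N}"]) auto
  also have "\<dots> = 1"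
    using sum_grad_prob[OF N \<eta>, of G] by (subst sum_ennreal) (simp_all add: grad_prob_nonneg)
  finally show "(\<integral>\<^sup>+j. ennreal (if j < N then grad_prob N \<eta> G j else 0) \<partial>count_space UNIV) = 1" .
qed (simp add: grad_prob_nonneg)

lemma set_pmf_arm_pmf: "set_pmf (arm_pmf N \<eta> G) \<subseteq> {..<N}"
  using pmf_arm_pmf by (auto simp: set_pmf_iff split: if_splits)

lemma expectation_arm_pmf:
  fixes f :: "nat \<Rightarrow> real"
  shows "measure_pmf.expectation (arm_pmf N \<eta> G) f = (\<Sum>i<N. grad_prob N \<eta> G i * f i)"
  using set_pmf_arm_pmf[of G] by (subst integral_measure_pmf[of "{..<N}"]) (auto simp: pmf_arm_pmf)

lemma set_pmf_hist: "set_pmf (hist N \<eta> g t) \<subseteq> {hs. set hs \<subseteq> {..<N} \<and> length hs = t}"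
  by (induction t) (use set_pmf_arm_pmf in fastforce)+

lemma finite_set_pmf_hist: "finite (set_pmf (hist N \<eta> g t))"
  using finite_lists_length_eq[of "{..<N}" t] by (rule finite_subset[OF set_pmf_hist]) simp

lemma integrable_hist [simp]: "integrable (measure_pmf (hist N \<eta> g t)) (f :: nat list \<Rightarrow> real)"
  by (rule integrable_measure_pmf_finite[OF finite_set_pmf_hist])

lemma expectation_hist_Suc:
  fixes f :: "nat list \<Rightarrow> real"
  shows "measure_pmf.expectation (hist N \<eta> g (Suc t)) f
       = measure_pmf.expectation (hist N \<eta> g t)
           (\<lambda>hs. \<Sum>i<N. grad_prob N \<eta> (est N \<eta> g hs) i * f (i # hs))"
proof -
  let ?H = "hist N \<eta> g t" and ?arm = "\<lambda>hs. arm_pmf N \<eta> (est N \<eta> g hs)"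
  have fin: "finite (set_pmf ?H)" "finite (set_pmf (?arm hs))" for hs
    using finite_set_pmf_hist finite_subset[OF set_pmf_arm_pmf] by auto
  have "measure_pmf.expectation (hist N \<eta> g (Suc t)) f
      = (\<Sum>hs\<in>set_pmf ?H. pmf ?H hs * measure_pmf.expectation (?arm hs) (\<lambda>i. f (i # hs)))"
    using fin by (simp add: pmf_expectation_bind[of "set_pmf ?H"])
  also have "\<dots> = measure_pmf.expectation ?H (\<lambda>hs. measure_pmf.expectation (?arm hs) (\<lambda>i. f (i # hs)))"
    using fin by (simp add: integral_measure_pmf[of "set_pmf ?H"])
  finally show ?thesis
    by (simp add: expectation_arm_pmf)
qed

lemma sum_played_gain_Cons:
  assumes "length hs = t"
  shows "(\<Sum>s<Suc t. g s (rev (i # hs) ! s)) = (\<Sum>s<t. g s (rev hs ! s)) + g t i"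
proof -
  have "(\<Sum>s<t. g s (rev (i # hs) ! s)) = (\<Sum>s<t. g s (rev hs ! s))"
    using assms by (intro sum.cong) (auto simp: nth_append)
  moreover have "rev (i # hs) ! t = i"
    using assms by (simp add: nth_append)
  ultimately show ?thesis
    by simp
qed

lemma expected_potential_minus_gain_le:
  assumes g: "\<forall>t<T. \<forall>i<N. -1 \<le> g t i \<and> g t i \<le> 0" and "t \<le> T"
  shows "measure_pmf.expectation (hist N \<eta> g t)
           (\<lambda>hs. smoothed_potential N \<eta> (est N \<eta> g hs) - (\<Sum>s<t. g s (rev hs ! s)))
         \<le> \<eta> + real t * (real N / sqrt \<eta>)"
  using \<open>t \<le> T\<close>
proof (induction t)
  case 0
  then show ?case
    using smoothed_potential_zero_le[OF N] \<eta> by simp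
next
  case (Suc t)
  let ?\<Phi> = "smoothed_potential N \<eta>" and ?G = "est N \<eta> g"
  let ?W = "\<lambda>t hs. ?\<Phi> (?G hs) - (\<Sum>s<t. g s (rev hs ! s))"
  have "measure_pmf.expectation (hist N \<eta> g (Suc t)) (?W (Suc t))
      = measure_pmf.expectation (hist N \<eta> g t)
          (\<lambda>hs. \<Sum>i<N. grad_prob N \<eta> (?G hs) i * ?W (Suc t) (i # hs))"
    by (rule expectation_hist_Suc)
  also have "\<dots> \<le> measure_pmf.expectation (hist N \<eta> g t) (\<lambda>hs. ?W t hs + real N / sqrt \<eta>)"
  proof (rule integral_mono_AE[OF integrable_hist integrable_hist], rule AE_pmfI)
    fix hs assume "hs \<in> set_pmf (hist N \<eta> g t)"
    then have len: "length hs = t"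
      using set_pmf_hist by blast
    define G where "G = ?G hs"
    define p where "p = grad_prob N \<eta> G"
    let ?gain = "\<Sum>s<t. g s (rev hs ! s)"
    have "grad_prob N \<eta> (?G hs) i * ?W (Suc t) (i # hs)
        = p i * (?\<Phi> (G(i := G i + g t i / p i)) - g t i) - p i * ?gain" for i
      unfolding sum_played_gain_Cons[OF len] by (simp add: G_def p_def len Let_def algebra_simps)
    then have "(\<Sum>i<N. grad_prob N \<eta> (?G hs) i * ?W (Suc t) (i # hs))
        = (\<Sum>i<N. p i * (?\<Phi> (G(i := G i + g t i / p i)) - g t i)) - (\<Sum>i<N. p i) * ?gain"
      by (simp add: sum_subtractf sum_distrib_right)
    also have "\<dots> \<le> ?\<Phi> G + real N / sqrt \<eta> - ?gain"
      using one_round_potential_le[OF N \<eta>, of "g t" G] g Suc.prems sum_grad_prob[OF N \<eta>, of G]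
      by (simp add: p_def)
    finally show "(\<Sum>i<N. grad_prob N \<eta> (?G hs) i * ?W (Suc t) (i # hs)) \<le> ?W t hs + real N / sqrt \<eta>"
      by (simp add: G_def)
  qed
  also have "\<dots> = measure_pmf.expectation (hist N \<eta> g t) (?W t) + real N / sqrt \<eta>"
    by simp
  also have "\<dots> \<le> \<eta> + real t * (real N / sqrt \<eta>) + real N / sqrt \<eta>"
    using Suc by simp
  also have "\<dots> = \<eta> + real (Suc t) * (real N / sqrt \<eta>)"
    by (simp add: algebra_simps add_divide_distrib)
  finally show ?case .
qed

text \<open>The estimate is unbiased, except that an arm of probability \<open>0\<close> receives no update
  (division by \<open>0\<close> yields \<open>0\<close>); since gains are nonpositive this errs upwards.\<close>

lemma sum_gain_le_expectation_est:
  assumes g: "\<forall>t<T. \<forall>i<N. -1 \<le> g t i \<and> g t i \<le> 0" and "t \<le> T" and i: "i < N"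
  shows "(\<Sum>s<t. g s i) \<le> measure_pmf.expectation (hist N \<eta> g t) (\<lambda>hs. est N \<eta> g hs i)"
  using \<open>t \<le> T\<close>
proof (induction t)
  case 0
  then show ?case by simp
next
  case (Suc t)
  let ?G = "est N \<eta> g"
  have "(\<Sum>s<Suc t. g s i) \<le> measure_pmf.expectation (hist N \<eta> g t) (\<lambda>hs. ?G hs i + g t i)"
    using Suc by simp
  also have "\<dots> \<le> measure_pmf.expectation (hist N \<eta> g t)
      (\<lambda>hs. \<Sum>j<N. grad_prob N \<eta> (?G hs) j * ?G (j # hs) i)"
  proof (rule integral_mono_AE[OF integrable_hist integrable_hist], rule AE_pmfI)
    fix hs assume "hs \<in> set_pmf (hist N \<eta> g t)"
    then have len: "length hs = t"
      using set_pmf_hist by blast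
    define G where "G = ?G hs"
    define p where "p = grad_prob N \<eta> G"
    have "(\<Sum>j<N. grad_prob N \<eta> (?G hs) j * ?G (j # hs) i)
        = (\<Sum>j<N. p j * G i + (if j = i then p i * (g t i / p i) else 0))"
      by (rule sum.cong) (auto simp: G_def p_def len Let_def algebra_simps)
    also have "\<dots> = G i + p i * (g t i / p i)"
      using sum_grad_prob[OF N \<eta>, of G] i
      by (simp add: sum.distrib p_def sum_distrib_right[symmetric])
    finally have "(\<Sum>j<N. grad_prob N \<eta> (?G hs) j * ?G (j # hs) i) = G i + p i * (g t i / p i)" .
    moreover have "g t i \<le> p i * (g t i / p i)"
      using g Suc.prems i by (cases "p i = 0") auto
    ultimately show "?G hs i + g t i \<le> (\<Sum>j<N. grad_prob N \<eta> (?G hs) j * ?G (j # hs) i)"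
      by (simp add: G_def)
  qed
  also have "\<dots> = measure_pmf.expectation (hist N \<eta> g (Suc t)) (\<lambda>hs. ?G hs i)"
    by (rule expectation_hist_Suc[symmetric])
  finally show ?case .
qed

lemma expected_regret_le:
  assumes g: "\<forall>t<T. \<forall>i<N. -1 \<le> g t i \<and> g t i \<le> 0"
  shows "expected_regret N T \<eta> g \<le> \<eta> + real T * (real N / sqrt \<eta>)"
proof -
  let ?H = "hist N \<eta> g T" and ?G = "est N \<eta> g"
  let ?gain = "\<lambda>hs. \<Sum>t<T. g t (rev hs ! t)"
  obtain k where k: "k < N" "(MAX i\<in>{..<N}. \<Sum>t<T. g t i) = (\<Sum>t<T. g t k)"
    using obtains_MAX[of "{..<N}"] N by auto
  have "expected_regret N T \<eta> g = (\<Sum>t<T. g t k) - measure_pmf.expectation ?H ?gain"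
    by (simp add: expected_regret_def k)
  also have "\<dots> \<le> measure_pmf.expectation ?H (\<lambda>hs. ?G hs k) - measure_pmf.expectation ?H ?gain"
    using sum_gain_le_expectation_est[OF g order.refl k(1)] by simp
  also have "\<dots> \<le> measure_pmf.expectation ?H (\<lambda>hs. smoothed_potential N \<eta> (?G hs) - ?gain hs)"
    using le_smoothed_potential[OF k(1)] \<eta> by (simp add: integral_mono)
  also have "\<dots> \<le> \<eta> + real T * (real N / sqrt \<eta>)"
    by (rule expected_potential_minus_gain_le[OF g order.refl])
  finally show ?thesis .
qed

end

theorem corollary1:
  fixes N T :: nat and g :: "nat \<Rightarrow> nat \<Rightarrow> real"
  assumes "0 < N" and "0 < T"
    and "\<forall>t<T. \<forall>i<N. -1 \<le> g t i \<and> g t i \<le> 0"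
  shows "expected_regret N T ((real N * real T) powr (2/3)) g \<le> 3 * (real N * real T) powr (2/3)"
proof -
  define x where "x = real N * real T"
  have x: "0 < x"
    using assms(1,2) by (simp add: x_def)
  have "sqrt (x powr (2/3)) = x powr (1/3)"
    using x by (simp add: powr_half_sqrt[symmetric] powr_powr)
  then have "real T * (real N / sqrt (x powr (2/3))) = x / x powr (1/3)"
    by (simp add: x_def mult.commute)
  also have "\<dots> = x powr (2/3)"
    using x powr_diff[of x 1 "1/3"] by simp
  finally have "x powr (2/3) + real T * (real N / sqrt (x powr (2/3))) = 2 * x powr (2/3)"
    by simp
  moreover have "expected_regret N T (x powr (2/3)) g \<le> x powr (2/3) + real T * (real N / sqrt (x powr (2/3)))"
    using expected_regret_le[OF assms(1) _ assms(3)] x by simp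
  moreover have "0 \<le> x powr (2/3)"
    by simp
  ultimately have "expected_regret N T (x powr (2/3)) g \<le> 3 * x powr (2/3)"
    by argo
  then show ?thesis
    by (simp add: x_def)
qed

end
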